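(* For every integer $n\ge0$ there are constants $C_n$ and $D_n$ (independent of $s$) such that for all real $s>-1$ \[ \int_0^1 P_{n,n}(x)x^s\,dx=C_n\frac{(-s)_n}{(\frac12+\frac s2)_{n+1}},\qquad \int_0^1\bigl[P_{n+1,n}(x)+P_{n,n+1}(x)\bigr]x^s\,dx=D_n\frac{(-s)_n}{(1+\frac s2)_{n+1}}. \]
   Context: Pochhammer symbol: $(a)_0=1$, $(a)_n=a(a+1)\cdots(a+n-1)$. Type II Legendre–Angelesco polynomials: for $n,m\ge0$, $P_{n,m}$ is the unique monic polynomial of degree $n+m$ with $\int_{-1}^0 P_{n,m}(x)x^k\,dx=0$ for $0\le k\le n-1$ and $\int_0^1 P_{n,m}(x)x^k\,dx=0$ for $0\le k\le m-1$. *)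

theory Defs
  imports "HOL-Analysis.Analysis" "HOL-Computational_Algebra.Polynomial"
begin

definition LA_poly :: "nat \<Rightarrow> nat \<Rightarrow> real poly" where
  "LA_poly n m = (THE p :: real poly.
      degree p = n + m \<and> lead_coeff p = 1 \<and>
      (\<forall>k<n. (LBINT x:{-1..0}. poly p x * x ^ k) = 0) \<and>
      (\<forall>k<m. (LBINT x:{0..1}. poly p x * x ^ k) = 0))"

end

theory Submission
  imports Defs "Jordan_Normal_Form.Determinant"
begin

text \<open>A nonzero polynomial orthogonal on an interval to all \<open>x^k\<close> with \<open>k < n\<close> has at least
  \<open>n\<close> roots of odd order there. Hence a polynomial of degree \<open>< n + m\<close> satisfying the Angelesco
  orthogonality conditions vanishes; this gives uniqueness of \<open>P_{n,m}\<close> and, by a dimension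
  count, its existence. The reflection \<open>x \<mapsto> -x\<close> exchanges \<open>[-1,0]\<close> and \<open>[0,1]\<close>, so \<open>P_{n,n}\<close>
  is even and \<open>P_{n,n+1}(x) = -P_{n+1,n}(-x)\<close>, which makes \<open>P_{n+1,n} + P_{n,n+1}\<close> odd.

  If \<open>p\<close> has degree at most \<open>2n+1\<close> and contains only the powers \<open>x^(2j+d)\<close> for a fixed
  \<open>d \<in> {0,1}\<close>, then \<open>\<integral>\<^sub>0\<^sup>1 p(x) x^s dx = \<Sum>\<^sub>j\<^sub>\<le>\<^sub>n a\<^sub>j / (s + 2j + d + 1)\<close>, which is
  \<open>G(s) / (2^(n+1) ((d+1)/2 + s/2)\<^sub>n\<^sub>+\<^sub>1)\<close> with \<open>deg G \<le> n\<close>. Orthogonality on \<open>[0,1]\<close> makes \<open>G\<close>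
  vanish at \<open>s = 0, \<dots>, n-1\<close>, so \<open>G\<close> is a multiple of \<open>s(s-1)\<cdots>(s-n+1) = (-1)^n (-s)\<^sub>n\<close>.\<close>

definition moment :: "real \<Rightarrow> real \<Rightarrow> nat \<Rightarrow> real poly \<Rightarrow> real" where
  "moment a b k p = integral {a..b} (\<lambda>x. poly p x * x ^ k)"

lemma integrable_poly_mult_power [intro]: "(\<lambda>x. poly p x * x ^ k :: real) integrable_on {a..b}"
  by (intro integrable_continuous_interval continuous_intros)

lemma set_integral_poly_mult_power: "(LBINT x:{a..b}. poly p x * x ^ k) = moment a b k p"
  unfolding moment_def
  by (intro set_borel_integral_eq_integral(2) borel_integrable_atLeastAtMost' continuous_intros)

lemma moment_add: "moment a b k (p + q) = moment a b k p + moment a b k q"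
  unfolding moment_def by (simp add: distrib_right integral_add integrable_poly_mult_power)

lemma moment_diff: "moment a b k (p - q) = moment a b k p - moment a b k q"
  unfolding moment_def by (simp add: left_diff_distrib integral_diff integrable_poly_mult_power)

lemma moment_smult: "moment a b k (Polynomial.smult c p) = c * moment a b k p"
  unfolding moment_def by (simp add: mult.assoc)

lemma moment_sum: "finite I \<Longrightarrow> moment a b k (\<Sum>i\<in>I. f i) = (\<Sum>i\<in>I. moment a b k (f i))"
  unfolding moment_def poly_sum sum_distrib_right by (rule integral_sum) auto

lemma integral_poly_mult_eq_0:
  assumes "\<forall>k<n. moment a b k p = 0" "degree w < n"
  shows "integral {a..b} (\<lambda>x. poly p x * poly w x) = 0"
proof -
  have "integral {a..b} (\<lambda>x. poly p x * poly w x)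
      = integral {a..b} (\<lambda>x. \<Sum>i\<le>degree w. coeff w i * (poly p x * x ^ i))"
    by (simp add: poly_altdef sum_distrib_left mult_ac)
  also have "\<dots> = (\<Sum>i\<le>degree w. coeff w i * moment a b i p)"
    unfolding moment_def by (subst integral_sum) (auto intro!: integrable_continuous_interval continuous_intros)
  also have "\<dots> = 0"
    using assms by (intro sum.neutral) auto
  finally show ?thesis .
qed

section \<open>Odd-order zeros of orthogonal polynomials\<close>

lemma order_prod_linear:
  fixes Z :: "'a::idom set"
  assumes "finite Z"
  shows "order z (\<Prod>y\<in>Z. [:-y, 1:]) = (if z \<in> Z then 1 else 0)"
  using assms
proof (induction Z rule: finite_induct)
  case empty
  then show ?case by (simp add: order_0I)
next
  case (insert y Z)
  have "order z [:-y, 1:] = (if z = y then 1 else 0)"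
    using order_power_n_n[of y 1] by (auto intro: order_0I)
  moreover have "[:-y, 1:] * (\<Prod>y\<in>Z. [:-y, 1:]) \<noteq> 0"
    by (rule no_zero_divisors) (use insert.hyps(1) in simp)+
  then have "order z (\<Prod>y\<in>insert y Z. [:-y, 1:]) = order z [:-y, 1:] + order z (\<Prod>y\<in>Z. [:-y, 1:])"
    unfolding prod.insert[OF insert.hyps] by (rule order_mult)
  ultimately show ?case
    using insert by simp
qed

lemma poly_sign_constant_if_no_roots:
  fixes g :: "real poly"
  assumes "\<forall>z\<in>{a<..<b}. poly g z \<noteq> 0"
  shows "(\<forall>x\<in>{a<..<b}. poly g x \<ge> 0) \<or> (\<forall>x\<in>{a<..<b}. poly g x \<le> 0)"
proof (rule ccontr)
  assume "\<not> ?thesis"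
  then obtain x y where xy: "x \<in> {a<..<b}" "y \<in> {a<..<b}" "poly g x < 0" "poly g y > 0"
    by force
  have "\<exists>z. min x y < z \<and> z < max x y \<and> poly g z = 0"
  proof (cases "x < y")
    case True
    then show ?thesis using poly_IVT_pos[of x y g] xy by auto
  next
    case False
    then have "y < x" using xy by (cases "x = y") auto
    then show ?thesis using poly_IVT_neg[of y x g] xy by auto
  qed
  then show False
    using assms xy(1,2) by (auto simp: min_def max_def split: if_splits)
qed

lemma poly_sign_constant_if_even_orders:
  fixes g :: "real poly"
  assumes "g \<noteq> 0" "\<And>z. z \<in> {a<..<b} \<Longrightarrow> even (order z g)"
  shows "(\<forall>x\<in>{a<..<b}. poly g x \<ge> 0) \<or> (\<forall>x\<in>{a<..<b}. poly g x \<le> 0)"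
  using assms
proof (induction "degree g" arbitrary: g rule: less_induct)
  case less
  show ?case
  proof (cases "\<exists>z\<in>{a<..<b}. poly g z = 0")
    case False
    then show ?thesis
      by (intro poly_sign_constant_if_no_roots) blast
  next
    case True
    then obtain z where z: "z \<in> {a<..<b}" "poly g z = 0" by blast
    then have "order z g \<noteq> 0" using less.prems(1) order_root by blast
    with less.prems(2)[OF z(1)] have "2 \<le> order z g" by presburger
    then obtain h where h: "g = [:-z, 1:] ^ 2 * h"
      using order_divides by (metis dvdE)
    have "h \<noteq> 0" using h less.prems(1) by auto
    have "even (order w h)" if "w \<in> {a<..<b}" for w
    proof -
      have "order w g = order w ([:-z, 1:] ^ 2) + order w h"
        using h less.prems(1) by (simp add: order_mult)
      moreover have "order w ([:-z, 1:] ^ 2) = (if w = z then 2 else 0)"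
        using order_power_n_n[of z 2] by (auto intro: order_0I)
      ultimately show ?thesis using less.prems(2)[OF that] by (auto split: if_splits)
    qed
    moreover have "degree h < degree g"
      using h \<open>h \<noteq> 0\<close> by (simp add: degree_mult_eq degree_power_eq)
    ultimately have "(\<forall>x\<in>{a<..<b}. poly h x \<ge> 0) \<or> (\<forall>x\<in>{a<..<b}. poly h x \<le> 0)"
      using less.hyps \<open>h \<noteq> 0\<close> by blast
    moreover have "poly g x = (x - z)\<^sup>2 * poly h x" for x
      using h by (simp add: power2_eq_square algebra_simps)
    ultimately show ?thesis
      by (metis mult_nonneg_nonneg mult_nonneg_nonpos zero_le_power2)
  qed
qed

lemma poly_eq_0_if_nonneg_integral_eq_0:
  fixes g :: "real poly"
  assumes "a < b" "\<forall>x\<in>{a<..<b}. poly g x \<ge> 0" "integral {a..b} (poly g) = 0"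
  shows "g = 0"
proof (rule ccontr)
  assume "g \<noteq> 0"
  have cont: "continuous_on {a..b} (poly g)"
    by (intro continuous_intros)
  then have "(poly g has_integral 0) {a..b}"
    using assms(3) integrable_integral[OF integrable_continuous_interval] by metis
  then have "poly g x = 0" if "x \<in> {a..b}" for x
    using has_integral_0_cbox_imp_0[of a b "poly g" x] cont that assms(1,2) by simp
  then have "{a..b} \<subseteq> {x. poly g x = 0}" by blast
  with poly_roots_finite[OF \<open>g \<noteq> 0\<close>] infinite_Icc[OF assms(1)] show False
    using finite_subset by blast
qed

lemma poly_eq_0_if_sign_constant_integral_eq_0:
  fixes g :: "real poly"
  assumes "a < b" "(\<forall>x\<in>{a<..<b}. poly g x \<ge> 0) \<or> (\<forall>x\<in>{a<..<b}. poly g x \<le> 0)"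
    and "integral {a..b} (poly g) = 0"
  shows "g = 0"
  using assms(2)
proof
  assume "\<forall>x\<in>{a<..<b}. poly g x \<ge> 0"
  then show ?thesis
    using poly_eq_0_if_nonneg_integral_eq_0 assms(1,3) by blast
next
  assume "\<forall>x\<in>{a<..<b}. poly g x \<le> 0"
  moreover have "integral {a..b} (poly (-g)) = 0"
    using assms(3) by (simp add: poly_minus[abs_def] integral_neg)
  ultimately show ?thesis
    using poly_eq_0_if_nonneg_integral_eq_0[OF assms(1), of "-g"] by simp
qed

lemma card_odd_order_roots_ge_if_moments_eq_0:
  fixes p :: "real poly"
  assumes "p \<noteq> 0" "a < b" "\<forall>k<n. moment a b k p = 0"
  shows "n \<le> card {z\<in>{a<..<b}. odd (order z p)}"
proof (rule ccontr)
  define Z where "Z = {z\<in>{a<..<b}. odd (order z p)}"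
  assume "\<not> n \<le> card Z"
  have "Z \<subseteq> {z. poly p z = 0}"
    unfolding Z_def using order_root by fastforce
  then have "finite Z"
    using poly_roots_finite[OF \<open>p \<noteq> 0\<close>] finite_subset by blast
  define w where "w = (\<Prod>y\<in>Z. [:-y, 1:])"
  define g where "g = p * w"
  have "w \<noteq> 0" "degree w = card Z"
    unfolding w_def using \<open>finite Z\<close> by (simp_all add: degree_prod_eq_sum_degree)
  then have "g \<noteq> 0" using \<open>p \<noteq> 0\<close> by (simp add: g_def)
  have int0: "integral {a..b} (poly g) = 0"
    using integral_poly_mult_eq_0[OF assms(3)] \<open>degree w = card Z\<close> \<open>\<not> n \<le> card Z\<close>
    by (simp add: g_def poly_mult[abs_def])
  have "even (order z g)" if "z \<in> {a<..<b}" for z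
  proof -
    have "order z g = order z p + order z w"
      unfolding g_def using \<open>g \<noteq> 0\<close> g_def order_mult by blast
    then show ?thesis
      using that order_prod_linear[OF \<open>finite Z\<close>] by (auto simp: w_def Z_def)
  qed
  then have "g = 0"
    using poly_eq_0_if_sign_constant_integral_eq_0[OF \<open>a < b\<close> _ int0]
      poly_sign_constant_if_even_orders[OF \<open>g \<noteq> 0\<close>] by blast
  with \<open>g \<noteq> 0\<close> show False by simp
qed

section \<open>Existence and uniqueness of the Legendre--Angelesco polynomials\<close>

definition angelesco_orthogonal :: "nat \<Rightarrow> nat \<Rightarrow> real poly \<Rightarrow> bool" where
  "angelesco_orthogonal n m p \<longleftrightarrow> (\<forall>k<n. moment (-1) 0 k p = 0) \<and> (\<forall>k<m. moment 0 1 k p = 0)"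

lemma angelesco_orthogonal_diff:
  "angelesco_orthogonal n m p \<Longrightarrow> angelesco_orthogonal n m q \<Longrightarrow> angelesco_orthogonal n m (p - q)"
  by (simp add: angelesco_orthogonal_def moment_diff)

lemma angelesco_orthogonal_degree_less_imp_eq_0:
  assumes "angelesco_orthogonal n m r" "degree r < n + m"
  shows "r = 0"
proof (rule ccontr)
  assume "r \<noteq> 0"
  define Z1 where "Z1 = {z\<in>{-1<..<0}. odd (order z r)}"
  define Z2 where "Z2 = {z\<in>{0<..<1}. odd (order z r)}"
  have "n \<le> card Z1" "m \<le> card Z2"
    using card_odd_order_roots_ge_if_moments_eq_0[OF \<open>r \<noteq> 0\<close>] assms(1)
    by (auto simp: Z1_def Z2_def angelesco_orthogonal_def)
  have sub: "Z1 \<union> Z2 \<subseteq> {z. poly r z = 0}"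
    unfolding Z1_def Z2_def using order_root by fastforce
  have fin: "finite {z. poly r z = 0}"
    by (rule poly_roots_finite[OF \<open>r \<noteq> 0\<close>])
  have "card Z1 + card Z2 = card (Z1 \<union> Z2)"
    using sub finite_subset[OF sub fin] by (subst card_Un_disjoint) (auto simp: Z1_def Z2_def)
  also have "\<dots> \<le> card {z. poly r z = 0}"
    by (rule card_mono[OF fin sub])
  also have "\<dots> \<le> degree r"
    by (rule card_poly_roots_bound[OF \<open>r \<noteq> 0\<close>])
  finally show False
    using \<open>n \<le> card Z1\<close> \<open>m \<le> card Z2\<close> assms(2) by simp
qed

lemma injective_square_system_solvable:
  fixes A :: "nat \<Rightarrow> nat \<Rightarrow> real" and b :: "nat \<Rightarrow> real"
  assumes inj: "\<And>c. \<forall>r<N. (\<Sum>i<N. A r i * c i) = 0 \<Longrightarrow> \<forall>i<N. c i = 0"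
  shows "\<exists>c. \<forall>r<N. (\<Sum>i<N. A r i * c i) = b r"
proof -
  define M where "M = mat N N (\<lambda>(r, i). A r i)"
  have M: "M \<in> carrier_mat N N" unfolding M_def by simp
  have mult_vec: "(M *\<^sub>v v) $ r = (\<Sum>i<N. A r i * v $ i)" if "r < N" "v \<in> carrier_vec N" for r v
    using that unfolding M_def
    by (auto simp: scalar_prod_def row_def lessThan_atLeast0 intro!: sum.cong)
  have "det M \<noteq> 0"
  proof
    assume "det M = 0"
    then obtain v where v: "v \<in> carrier_vec N" "v \<noteq> 0\<^sub>v N" "M *\<^sub>v v = 0\<^sub>v N"
      using det_0_iff_vec_prod_zero[OF M] by blast
    have "\<forall>r<N. (\<Sum>i<N. A r i * v $ i) = 0"
    proof (intro allI impI)
      fix r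
      assume "r < N"
      then show "(\<Sum>i<N. A r i * v $ i) = 0"
        using v(3) mult_vec[OF _ v(1)] by (metis index_zero_vec(1))
    qed
    then have "v = 0\<^sub>v N"
      using inj v(1) by (intro eq_vecI) auto
    with v(2) show False by simp
  qed
  then obtain B where B: "B \<in> carrier_mat N N" "M * B = 1\<^sub>m N"
    using det_non_zero_imp_unit[OF M, of undefined] unfolding Units_def ring_mat_def by auto
  define v where "v = B *\<^sub>v vec N b"
  have "v \<in> carrier_vec N" "M *\<^sub>v v = vec N b"
    unfolding v_def using B M by (simp_all flip: assoc_mult_mat_vec)
  then have "\<forall>r<N. (\<Sum>i<N. A r i * v $ i) = b r"
    using mult_vec by (metis index_vec)
  then show ?thesis by blast
qed

definition is_LA_poly :: "nat \<Rightarrow> nat \<Rightarrow> real poly \<Rightarrow> bool" where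
  "is_LA_poly n m p \<longleftrightarrow> degree p = n + m \<and> lead_coeff p = 1 \<and> angelesco_orthogonal n m p"

definition angelesco_moment :: "nat \<Rightarrow> nat \<Rightarrow> real poly \<Rightarrow> real" where
  "angelesco_moment n r p = (if r < n then moment (-1) 0 r p else moment 0 1 (r - n) p)"

lemma angelesco_orthogonal_iff_moments:
  "angelesco_orthogonal n m p \<longleftrightarrow> (\<forall>r<n + m. angelesco_moment n r p = 0)"
proof
  assume "angelesco_orthogonal n m p"
  then show "\<forall>r<n + m. angelesco_moment n r p = 0"
    by (auto simp: angelesco_orthogonal_def angelesco_moment_def)
next
  assume L0: "\<forall>r<n + m. angelesco_moment n r p = 0"
  have "moment (-1) 0 k p = 0" if "k < n" for k
    using L0[rule_format, of k] that by (simp add: angelesco_moment_def)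
  moreover have "moment 0 1 k p = 0" if "k < m" for k
    using L0[rule_format, of "n + k"] that by (simp add: angelesco_moment_def)
  ultimately show "angelesco_orthogonal n m p"
    by (simp add: angelesco_orthogonal_def)
qed

lemma angelesco_moment_add:
  "angelesco_moment n r (p + q) = angelesco_moment n r p + angelesco_moment n r q"
  by (simp add: angelesco_moment_def moment_add)

lemma angelesco_moment_sum_smult:
  fixes N :: nat
  shows "angelesco_moment n r (\<Sum>i<N. Polynomial.smult (c i) (q i)) = (\<Sum>i<N. angelesco_moment n r (q i) * c i)"
  by (simp add: angelesco_moment_def moment_sum moment_smult mult.commute)

lemma is_LA_poly_exists: "\<exists>p. is_LA_poly n m p"
proof -
  define N where "N = n + m"
  define q where "q c = (\<Sum>i<N. Polynomial.smult (c i) (monom 1 i))" for c :: "nat \<Rightarrow> real"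
  have coeff_q: "coeff (q c) j = (if j < N then c j else 0)" for c j
    by (simp add: q_def coeff_sum if_distrib[of "(*) _"] cong: if_cong)
  \<comment> \<open>The coefficients below the leading one solve a square system, injective by uniqueness.\<close>
  have "\<exists>c. \<forall>r<N. (\<Sum>i<N. angelesco_moment n r (monom 1 i) * c i) = - angelesco_moment n r (monom 1 N)"
  proof (rule injective_square_system_solvable)
    fix c
    assume "\<forall>r<N. (\<Sum>i<N. angelesco_moment n r (monom 1 i) * c i) = 0"
    then have "angelesco_orthogonal n m (q c)"
      by (simp add: angelesco_orthogonal_iff_moments q_def angelesco_moment_sum_smult N_def)
    moreover have "degree (q c) < n + m" if "0 < N"
      using that by (intro degree_lessI) (auto simp: coeff_q N_def)
    ultimately have "q c = 0 \<or> N = 0"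
      using angelesco_orthogonal_degree_less_imp_eq_0 by blast
    then show "\<forall>i<N. c i = 0"
      using coeff_q[of c] by (metis coeff_0 not_less_zero)
  qed
  then obtain c where c: "\<forall>r<N. angelesco_moment n r (q c) = - angelesco_moment n r (monom 1 N)"
    by (auto simp: q_def angelesco_moment_sum_smult)
  define p where "p = monom 1 N + q c"
  have coeff_p: "coeff p j = (if j = N then 1 else if j < N then c j else 0)" for j
    by (simp add: p_def coeff_q)
  have "degree p = N"
    by (intro antisym degree_le le_degree) (auto simp: coeff_p)
  moreover have "angelesco_orthogonal n m p"
    using c by (simp add: angelesco_orthogonal_iff_moments p_def angelesco_moment_add N_def)
  ultimately show ?thesis
    using coeff_p[of N] unfolding is_LA_poly_def N_def by auto
qed

lemma is_LA_poly_unique: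
  assumes "is_LA_poly n m p" "is_LA_poly n m q"
  shows "p = q"
proof -
  have "degree (p - q) \<le> n + m"
    using assms by (intro degree_diff_le) (auto simp: is_LA_poly_def)
  moreover have "coeff (p - q) (n + m) = 0"
    using assms by (auto simp: is_LA_poly_def)
  ultimately have "degree (p - q) < n + m \<or> p - q = 0"
    by (metis le_neq_implies_less leading_coeff_0_iff)
  moreover have "angelesco_orthogonal n m (p - q)"
    using assms by (intro angelesco_orthogonal_diff) (auto simp: is_LA_poly_def)
  ultimately have "p - q = 0"
    using angelesco_orthogonal_degree_less_imp_eq_0 by blast
  then show ?thesis by simp
qed

lemma is_LA_poly_LA_poly: "is_LA_poly n m (LA_poly n m)"
proof -
  have "LA_poly n m = (THE p. is_LA_poly n m p)"
    by (simp add: LA_poly_def is_LA_poly_def angelesco_orthogonal_def set_integral_poly_mult_power)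
  moreover have "\<exists>!p. is_LA_poly n m p"
    using is_LA_poly_exists is_LA_poly_unique by blast
  ultimately show ?thesis
    by (simp add: theI')
qed

lemma LA_poly_eqI: "is_LA_poly n m p \<Longrightarrow> LA_poly n m = p"
  using is_LA_poly_LA_poly is_LA_poly_unique by blast

section \<open>Reflection symmetry\<close>

lemma moment_pcompose_minus:
  "moment (-b) (-a) k (p \<circ>\<^sub>p [:0, -1:]) = (-1) ^ k * moment a b k p"
proof -
  define f where "f x = poly p x * x ^ k" for x :: real
  have "(-1) ^ k * (-x) ^ k = x ^ k" for x :: real
    by (simp flip: power_mult_distrib)
  then have "poly (p \<circ>\<^sub>p [:0, -1:]) x * x ^ k = (-1) ^ k * f (-x)" for x :: real
    by (simp add: f_def poly_pcompose mult.left_commute)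
  then have "moment (-b) (-a) k (p \<circ>\<^sub>p [:0, -1:]) = integral {-b..-a} (\<lambda>x. (-1) ^ k * f (-x))"
    by (simp add: moment_def)
  also have "\<dots> = (-1) ^ k * integral {a..b} f"
    by (simp only: integral_mult_right Henstock_Kurzweil_Integration.integral_reflect_real)
  finally show ?thesis
    by (simp add: moment_def f_def[abs_def])
qed

lemma angelesco_orthogonal_smult:
  "angelesco_orthogonal n m p \<Longrightarrow> angelesco_orthogonal n m (Polynomial.smult c p)"
  by (simp add: angelesco_orthogonal_def moment_smult)

lemma angelesco_orthogonal_pcompose_minus:
  "angelesco_orthogonal n m p \<Longrightarrow> angelesco_orthogonal m n (p \<circ>\<^sub>p [:0, -1:])"
  using moment_pcompose_minus[where a=0 and b=1 and p=p] moment_pcompose_minus[where a="-1" and b=0 and p=p]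
  by (simp add: angelesco_orthogonal_def)

lemma LA_poly_swap: "LA_poly m n = Polynomial.smult ((-1) ^ (n + m)) (LA_poly n m \<circ>\<^sub>p [:0, -1:])"
proof (rule LA_poly_eqI)
  define q where "q = LA_poly n m \<circ>\<^sub>p [:0, -1:]"
  have P: "degree (LA_poly n m) = n + m" "lead_coeff (LA_poly n m) = 1"
    "angelesco_orthogonal n m (LA_poly n m)"
    using is_LA_poly_LA_poly[of n m] unfolding is_LA_poly_def by auto
  have "degree q = n + m"
    using P(1) by (simp add: q_def degree_pcompose)
  moreover have "coeff q (n + m) = (-1) ^ (n + m)"
    using P(1,2) by (simp add: q_def coeff_pcompose_linear)
  moreover have "(-1::real) ^ (n + m) * (-1) ^ (n + m) = 1"
    by (simp flip: power_add)
  moreover have "angelesco_orthogonal m n (Polynomial.smult ((-1) ^ (n + m)) q)"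
    unfolding q_def by (intro angelesco_orthogonal_smult angelesco_orthogonal_pcompose_minus P(3))
  ultimately show "is_LA_poly m n (Polynomial.smult ((-1) ^ (n + m)) q)"
    by (simp add: is_LA_poly_def)
qed

lemma coeff_LA_poly_diagonal_odd: "odd i \<Longrightarrow> coeff (LA_poly n n) i = 0"
proof -
  assume "odd i"
  have "coeff (LA_poly n n) i = (-1) ^ i * coeff (LA_poly n n) i"
    by (subst (1) LA_poly_swap) (simp add: coeff_pcompose_linear)
  with \<open>odd i\<close> show ?thesis by simp
qed

lemma coeff_LA_poly_sum_even: "even i \<Longrightarrow> coeff (LA_poly (n + 1) n + LA_poly n (n + 1)) i = 0"
proof -
  assume "even i"
  have "coeff (LA_poly n (n + 1)) i = - ((-1) ^ i * coeff (LA_poly (n + 1) n) i)"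
    by (subst LA_poly_swap) (simp add: coeff_pcompose_linear)
  with \<open>even i\<close> show ?thesis by simp
qed

section \<open>Mellin transform of a polynomial on \<open>[0,1]\<close>\<close>

lemma poly_eq_sum_lessThan:
  fixes p :: "'a::{comm_semiring_0,semiring_1} poly"
  assumes "degree p < M"
  shows "poly p x = (\<Sum>i<M. coeff p i * x ^ i)"
  unfolding poly_altdef
  by (rule sum.mono_neutral_left) (use assms in \<open>auto simp: coeff_eq_0\<close>)

lemma poly_mult_powr_eq_sum:
  fixes x s :: real
  assumes "x \<ge> 0" "degree p < M"
  shows "poly p x * x powr s = (\<Sum>i<M. coeff p i * x powr (s + real i))"
proof (cases "x = 0")
  case False
  with assms(1) have "x ^ i * x powr s = x powr (s + real i)" for i
    by (simp add: powr_add powr_realpow)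
  then show ?thesis
    using assms(2) by (simp add: poly_eq_sum_lessThan sum_distrib_right mult.assoc)
qed simp

lemma has_integral_poly_mult_powr:
  fixes s :: real
  assumes "s > -1" "degree p < M"
  shows "((\<lambda>x. poly p x * x powr s) has_integral (\<Sum>i<M. coeff p i / (s + real i + 1))) {0..1}"
proof -
  have "((\<lambda>x. \<Sum>i<M. coeff p i * x powr (s + real i)) has_integral
      (\<Sum>i<M. coeff p i * (1 / (s + real i + 1)))) {0..1}"
    using assms(1) has_integral_powr_from_0[of "s + real _" 1]
    by (intro has_integral_sum finite_lessThan has_integral_mult_right) (simp add: add.assoc)
  then show ?thesis
    using poly_mult_powr_eq_sum[OF _ assms(2)] by (subst has_integral_cong) auto
qed

lemma absolutely_integrable_poly_mult_powr:
  fixes s :: real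
  assumes "s > -1"
  shows "(\<lambda>x. poly p x * x powr s) absolutely_integrable_on {0..1}"
proof -
  have "(\<lambda>x. x powr t) absolutely_integrable_on {0..1::real}" if "t > -1" for t
    using has_integral_powr_from_0[of t 1] that
    by (intro nonnegative_absolutely_integrable_1) (auto simp: has_integral_integrable)
  then have "(\<lambda>x. \<Sum>i<Suc (degree p). coeff p i * x powr (s + real i)) absolutely_integrable_on {0..1}"
    using assms by (intro absolutely_integrable_sum finite_lessThan set_integrable_mult_right) auto
  then show ?thesis
    using poly_mult_powr_eq_sum[of _ p "Suc (degree p)" s]
    by (subst set_integrable_cong[OF refl refl]) auto
qed

lemma set_integral_poly_mult_powr:
  fixes s :: real
  assumes "s > -1" "degree p < M"
  shows "(LBINT x:{0..1}. poly p x * x powr s) = (\<Sum>i<M. coeff p i / (s + real i + 1))"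
proof -
  let ?f = "\<lambda>x. poly p x * x powr s"
  have [measurable]: "poly p \<in> borel_measurable borel"
    by (intro borel_measurable_continuous_onI continuous_intros)
  have "(\<lambda>x. indicator {0..1} x *\<^sub>R ?f x) \<in> borel_measurable lborel"
    by simp
  then have "set_integrable lborel {0..1} ?f"
    using absolutely_integrable_poly_mult_powr[OF assms(1), of p]
    unfolding set_integrable_def by (simp add: integrable_completion)
  then have "(LBINT x:{0..1}. ?f x) = integral {0..1} ?f"
    by (rule set_borel_integral_eq_integral(2))
  with has_integral_poly_mult_powr[OF assms] show ?thesis
    by (simp add: integral_unique)
qed

lemma moment_0_1_eq_sum:
  assumes "degree p < M"
  shows "moment 0 1 k p = (\<Sum>i<M. coeff p i / (real k + real i + 1))"
proof -
  \<comment> \<open>\<open>x ^ k\<close> and \<open>x powr k\<close> differ only at \<open>x = 0\<close>, where \<open>0 powr t = 0\<close>.\<close>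
  have "moment 0 1 k p = integral {0..1} (\<lambda>x. poly p x * x powr real k)"
    unfolding moment_def by (rule integral_spike[of "{0}"]) (auto simp: powr_realpow)
  with has_integral_poly_mult_powr[OF _ assms, of "real k"] show ?thesis
    by (simp add: integral_unique)
qed

section \<open>Sums of simple fractions\<close>

lemma sum_fractions_eq_poly_div_prod:
  fixes a b :: "nat \<Rightarrow> real"
  obtains G where "degree G \<le> n"
    "\<And>x. (\<forall>i\<le>n. x + b i \<noteq> 0) \<Longrightarrow> (\<Sum>j\<le>n. a j / (x + b j)) = poly G x / (\<Prod>i\<le>n. x + b i)"
proof
  define G where "G = (\<Sum>j\<le>n. Polynomial.smult (a j) (\<Prod>i\<in>{..n}-{j}. [:b i, 1:]))"
  show "degree G \<le> n"
    unfolding G_def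
  proof (rule degree_sum_le)
    fix j
    assume "j \<in> {..n}"
    have "degree (\<Prod>i\<in>{..n}-{j}. [:b i, 1:]) \<le> (\<Sum>i\<in>{..n}-{j}. degree [:b i, 1:])"
      using degree_prod_sum_le[of "{..n}-{j}" "\<lambda>i. [:b i, 1:]"] by (simp add: comp_def)
    also have "\<dots> = n"
      using \<open>j \<in> {..n}\<close> by simp
    finally show "degree (Polynomial.smult (a j) (\<Prod>i\<in>{..n}-{j}. [:b i, 1:])) \<le> n"
      using degree_smult_le le_trans by blast
  qed simp
  fix x
  assume nz: "\<forall>i\<le>n. x + b i \<noteq> 0"
  have "a j / (x + b j) = a j * (\<Prod>i\<in>{..n}-{j}. x + b i) / (\<Prod>i\<le>n. x + b i)" if "j \<le> n" for j
  proof -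
    have "(\<Prod>i\<le>n. x + b i) = (x + b j) * (\<Prod>i\<in>{..n}-{j}. x + b i)"
      using that by (subst prod.remove[of _ j]) auto
    moreover have "(\<Prod>i\<in>{..n}-{j}. x + b i) \<noteq> 0"
      using nz by simp
    ultimately show ?thesis by simp
  qed
  then show "(\<Sum>j\<le>n. a j / (x + b j)) = poly G x / (\<Prod>i\<le>n. x + b i)"
    by (simp add: G_def poly_sum poly_prod sum_divide_distrib add.commute)
qed

lemma poly_eq_smult_prod_roots:
  fixes G :: "'a::idom poly"
  assumes "finite Z" "degree G \<le> card Z" "\<forall>z\<in>Z. poly G z = 0"
  shows "G = Polynomial.smult (coeff G (card Z)) (\<Prod>z\<in>Z. [:-z, 1:])"
proof (rule ccontr)
  define Q where "Q = (\<Prod>z\<in>Z. [:-z, 1:])"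
  define H where "H = G - Polynomial.smult (coeff G (card Z)) Q"
  assume "G \<noteq> Polynomial.smult (coeff G (card Z)) (\<Prod>z\<in>Z. [:-z, 1:])"
  then have "H \<noteq> 0" by (simp add: H_def Q_def)
  have "degree Q = card Z"
    unfolding Q_def using assms(1) by (simp add: degree_prod_eq_sum_degree)
  moreover have "lead_coeff Q = 1"
    unfolding Q_def by (simp add: lead_coeff_prod)
  ultimately have "degree H \<le> card Z" "coeff H (card Z) = 0"
    using assms(2) by (auto simp: H_def intro: degree_diff_le)
  then have "degree H < card Z"
    using \<open>H \<noteq> 0\<close> by (metis le_neq_implies_less leading_coeff_0_iff)
  moreover have "Z \<subseteq> {x. poly H x = 0}"
    using assms(3) by (auto simp: H_def Q_def poly_prod assms(1))
  then have "card Z \<le> degree H"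
    using card_mono[OF poly_roots_finite[OF \<open>H \<noteq> 0\<close>]] card_poly_roots_bound[OF \<open>H \<noteq> 0\<close>]
    by (meson le_trans)
  ultimately show False by simp
qed

lemma poly_prod_pochhammer_neg:
  "poly (\<Prod>k<n. [:- of_nat k, 1:]) s = (-1) ^ n * pochhammer (-s) n"
  for s :: "'a::comm_ring_1"
proof -
  have "pochhammer (-s) n = (\<Prod>k<n. - (s - of_nat k))"
    by (simp add: pochhammer_prod atLeast0LessThan)
  also have "\<dots> = (-1) ^ n * (\<Prod>k<n. s - of_nat k)"
    by (subst prod_uminus) simp
  finally show ?thesis
    by (simp add: poly_prod)
qed

lemma prod_eq_pochhammer_half:
  "(\<Prod>i\<le>n. s + 2 * real i + e) = 2 ^ Suc n * pochhammer (e / 2 + s / 2) (Suc n)"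
proof -
  have "pochhammer (e / 2 + s / 2) (Suc n) = (\<Prod>i\<le>n. (s + 2 * real i + e) / 2)"
    by (simp add: pochhammer_Suc_prod atLeast0AtMost field_simps)
  also have "\<dots> = (\<Prod>i\<le>n. s + 2 * real i + e) / 2 ^ Suc n"
    by (simp add: prod_dividef)
  finally show ?thesis by simp
qed

lemma sum_fractions_eq_pochhammer_quotient:
  fixes a :: "nat \<Rightarrow> real" and e :: real
  assumes "e \<ge> 1" and vanish: "\<And>k. k < n \<Longrightarrow> (\<Sum>j\<le>n. a j / (real k + 2 * real j + e)) = 0"
  shows "\<exists>C. \<forall>s>-1. (\<Sum>j\<le>n. a j / (s + 2 * real j + e))
           = C * pochhammer (-s) n / pochhammer (e / 2 + s / 2) (Suc n)"
proof -
  have nz: "x + (2 * real i + e) \<noteq> 0" if "x > -1" for x i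
    using that assms(1) of_nat_0_le_iff[of i] by linarith
  obtain G where "degree G \<le> n" and G: "\<And>x. (\<forall>i\<le>n. x + (2 * real i + e) \<noteq> 0) \<Longrightarrow>
      (\<Sum>j\<le>n. a j / (x + (2 * real j + e))) = poly G x / (\<Prod>i\<le>n. x + (2 * real i + e))"
    using sum_fractions_eq_poly_div_prod[of n "\<lambda>i. 2 * real i + e" a] by blast
  have frac: "(\<Sum>j\<le>n. a j / (x + 2 * real j + e)) = poly G x / (\<Prod>i\<le>n. x + 2 * real i + e)"
    if "x > -1" for x
    using G[of x] nz[OF that] by (simp add: add.assoc)
  have "poly G (real k) = 0" if "k < n" for k
  proof -
    have "(\<Prod>i\<le>n. real k + 2 * real i + e) \<noteq> 0"
      using nz[of "real k"] by (simp add: add.assoc)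
    then show ?thesis
      using frac[of "real k"] vanish[OF that] by simp
  qed
  then have "G = Polynomial.smult (coeff G n) (\<Prod>z\<in>real ` {..<n}. [:-z, 1:])"
    using poly_eq_smult_prod_roots[of "real ` {..<n}" G] \<open>degree G \<le> n\<close>
    by (simp add: card_image)
  also have "(\<Prod>z\<in>real ` {..<n}. [:-z, 1:]) = (\<Prod>k<n. [:- of_nat k, 1:])"
    by (simp add: prod.reindex)
  finally have "poly G s = coeff G n * (-1) ^ n * pochhammer (-s) n" for s
    using poly_prod_pochhammer_neg[of n s] by (metis mult.assoc poly_smult)
  then have "\<forall>s>-1. (\<Sum>j\<le>n. a j / (s + 2 * real j + e))
      = (coeff G n * (-1) ^ n / 2 ^ Suc n) * pochhammer (-s) n / pochhammer (e / 2 + s / 2) (Suc n)"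
    using frac by (simp add: prod_eq_pochhammer_half)
  then show ?thesis by blast
qed

lemma sum_lessThan_parity:
  fixes f :: "nat \<Rightarrow> 'a::comm_monoid_add"
  assumes "d \<le> 1" "\<And>i. odd (i + d) \<Longrightarrow> f i = 0"
  shows "(\<Sum>i<2 * n + 2. f i) = (\<Sum>j\<le>n. f (2 * j + d))"
proof -
  have "(\<Sum>i<2 * n + 2. f i) = (\<Sum>j\<le>n. f (2 * j) + f (Suc (2 * j)))"
    using sum.in_pairs_0[of f n] by (simp add: lessThan_Suc_atMost flip: Suc_1)
  also have "\<dots> = (\<Sum>j\<le>n. f (2 * j + d))"
    using assms by (cases d) auto
  finally show ?thesis .
qed

lemma set_integral_poly_powr_eq_pochhammer_quotient:
  fixes p :: "real poly" and d :: nat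
  assumes "d \<le> 1" "degree p \<le> 2 * n + 1" "\<And>i. odd (i + d) \<Longrightarrow> coeff p i = 0"
    and "\<forall>k<n. moment 0 1 k p = 0"
  shows "\<exists>C. \<forall>s>-1. (LBINT x:{0..1}. poly p x * x powr s)
           = C * pochhammer (-s) n / pochhammer ((real d + 1) / 2 + s / 2) (n + 1)"
proof -
  have deg: "degree p < 2 * n + 2"
    using assms(2) by simp
  have sum: "(\<Sum>i<2 * n + 2. coeff p i / (t + real i + 1))
      = (\<Sum>j\<le>n. coeff p (2 * j + d) / (t + 2 * real j + (real d + 1)))" for t
    using sum_lessThan_parity[OF assms(1), of "\<lambda>i. coeff p i / (t + real i + 1)"] assms(3)
    by (simp add: algebra_simps)
  have "\<exists>C. \<forall>s>-1. (\<Sum>j\<le>n. coeff p (2 * j + d) / (s + 2 * real j + (real d + 1)))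
      = C * pochhammer (-s) n / pochhammer ((real d + 1) / 2 + s / 2) (Suc n)"
    using assms(4) moment_0_1_eq_sum[OF deg] sum
    by (intro sum_fractions_eq_pochhammer_quotient) auto
  then show ?thesis
    using set_integral_poly_mult_powr[OF _ deg] sum by simp
qed

theorem mainTheorem10:
  fixes n :: nat
  shows "\<exists>C D :: real. \<forall>s :: real. s > -1 \<longrightarrow>
    (LBINT x:{0..1}. poly (LA_poly n n) x * x powr s)
        = C * pochhammer (-s) n / pochhammer (1/2 + s/2) (n + 1)
    \<and> (LBINT x:{0..1}. (poly (LA_poly (n+1) n) x + poly (LA_poly n (n+1)) x) * x powr s)
        = D * pochhammer (-s) n / pochhammer (1 + s/2) (n + 1)"
proof -
  define q where "q = LA_poly (n + 1) n + LA_poly n (n + 1)"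
  have P: "is_LA_poly n n (LA_poly n n)" "is_LA_poly (n + 1) n (LA_poly (n + 1) n)"
    "is_LA_poly n (n + 1) (LA_poly n (n + 1))"
    by (rule is_LA_poly_LA_poly)+
  have "degree q \<le> 2 * n + 1"
    using P(2,3) degree_add_le[of "LA_poly (n + 1) n" "2 * n + 1"] by (simp add: q_def is_LA_poly_def)
  moreover have "\<forall>k<n. moment 0 1 k q = 0"
    using P(2,3) by (simp add: q_def moment_add is_LA_poly_def angelesco_orthogonal_def)
  ultimately obtain D where D: "\<forall>s>-1. (LBINT x:{0..1}. poly q x * x powr s)
      = D * pochhammer (-s) n / pochhammer (1 + s / 2) (n + 1)"
    using set_integral_poly_powr_eq_pochhammer_quotient[of 1 q n] coeff_LA_poly_sum_even
    by (auto simp: q_def)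
  obtain C where "\<forall>s>-1. (LBINT x:{0..1}. poly (LA_poly n n) x * x powr s)
      = C * pochhammer (-s) n / pochhammer (1 / 2 + s / 2) (n + 1)"
    using set_integral_poly_powr_eq_pochhammer_quotient[of 0 "LA_poly n n" n] P(1)
      coeff_LA_poly_diagonal_odd
    by (auto simp: is_LA_poly_def angelesco_orthogonal_def)
  with D show ?thesis
    by (auto simp: q_def)
qed

end
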